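(* Let $m\le t/100$. For any communication protocol $\Pi$ for the $m$-party $\textsf{MostlyEq}$ problem with failure probability $\Pr[\Pi(\boldsymbol P_U)=1]+\Pr[\Pi(\boldsymbol P_{Eq})=0]<0.1$, we have $\mathrm I\big(\Pi(\boldsymbol P_U);\boldsymbol P_U\big)=\Omega(1)$, i.e. the mutual information between the transcript and the input, when the input is drawn from $\boldsymbol P_U$, is at least an absolute constant.
   Context: In the $m$-party $\textsf{MostlyEq}$ problem, party $i$ holds $z_i\in[t]$, and $(z_1,\dots,z_m)$ is drawn from one of: $\boldsymbol P_U$, where the $z_i$ are i.i.d. uniform on $[t]$; or $\boldsymbol P_{Eq}$, where $\alpha$ is uniform in $[t]$ and independently each $z_i=\alpha$ with probability $1/2$ and otherwise is uniform on $[t]$. The parties communicate (possibly with private randomness) and the protocol outputs $1$ to indicate $\boldsymbol P_{Eq}$ and $0$ to indicate $\boldsymbol P_U$; $\Pi(\cdot)$ denotes the transcript on an input from the given distribution. *)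

theory Defs
  imports "HOL-Probability.Probability"
begin

(* Inputs: party i (0 <= i < m) holds z ! i \<in> {0..<t}  (the set [t], shifted to start at 0). *)

definition unif_inputs :: "nat \<Rightarrow> nat \<Rightarrow> nat list pmf" where
  "unif_inputs m t = map_pmf (\<lambda>f. map f [0..<m]) (Pi_pmf {..<m} 0 (\<lambda>_. pmf_of_set {..<t}))"

definition eq_inputs :: "nat \<Rightarrow> nat \<Rightarrow> nat list pmf" where
  "eq_inputs m t =
     do { \<alpha> \<leftarrow> pmf_of_set {..<t};
          map_pmf (\<lambda>f. map f [0..<m])
            (Pi_pmf {..<m} 0 (\<lambda>_. do { b \<leftarrow> bernoulli_pmf (1/2);
                                         if b then return_pmf \<alpha> else pmf_of_set {..<t} })) }"

(* A blackboard protocol with private randomness, in kernel form: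
   spk \<tau> = the party who speaks after transcript-prefix \<tau>;
   msg \<tau> x = distribution of the next message when the speaker's input is x;
   R = number of rounds; the output is a function of the full transcript. *)
fun transcript :: "(nat list \<Rightarrow> nat) \<Rightarrow> (nat list \<Rightarrow> nat \<Rightarrow> nat pmf) \<Rightarrow> nat list \<Rightarrow> nat \<Rightarrow> nat list pmf" where
  "transcript spk msg z 0 = return_pmf []"
| "transcript spk msg z (Suc k) =
     do { \<tau> \<leftarrow> transcript spk msg z k;
          a \<leftarrow> msg \<tau> (z ! spk \<tau>);
          return_pmf (\<tau> @ [a]) }"

definition input_transcript :: "nat list pmf \<Rightarrow> (nat list \<Rightarrow> nat) \<Rightarrow> (nat list \<Rightarrow> nat \<Rightarrow> nat pmf) \<Rightarrow> nat \<Rightarrow> (nat list \<times> nat list) pmf" where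
  "input_transcript D spk msg R = do { z \<leftarrow> D; \<tau> \<leftarrow> transcript spk msg z R; return_pmf (z, \<tau>) }"

definition prob_out1 :: "nat list pmf \<Rightarrow> (nat list \<Rightarrow> nat) \<Rightarrow> (nat list \<Rightarrow> nat \<Rightarrow> nat pmf) \<Rightarrow> nat \<Rightarrow> (nat list \<Rightarrow> bool) \<Rightarrow> real" where
  "prob_out1 D spk msg R out = measure_pmf.prob (input_transcript D spk msg R) {p. out (snd p)}"

definition info_cost :: "nat list pmf \<Rightarrow> (nat list \<Rightarrow> nat) \<Rightarrow> (nat list \<Rightarrow> nat \<Rightarrow> nat pmf) \<Rightarrow> nat \<Rightarrow> real" where
  "info_cost D spk msg R =
     prob_space.mutual_information (measure_pmf (input_transcript D spk msg R)) 2
       (count_space UNIV) (count_space UNIV) snd fst"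

end

theory Submission
  imports Defs
begin

text \<open>Given the inputs \<open>z\<close>, a transcript \<open>\<tau>\<close> has probability \<open>\<Prod>\<^sub>i q\<^sub>i(z\<^sub>i)\<close>, where \<open>q\<^sub>i\<close> collects
  the rounds in which party \<open>i\<close> speaks. Hence \<open>P\<^sub>U(\<tau>) = \<Prod>\<^sub>i Q\<^sub>i\<close> with \<open>Q\<^sub>i\<close> the average of \<open>q\<^sub>i\<close>,
  and \<open>P\<^sub>E\<^sub>q(\<tau>)\<close> is the average over \<open>\<alpha>\<close> of \<open>\<Prod>\<^sub>i (q\<^sub>i(\<alpha>) + Q\<^sub>i) / 2\<close>. The inequality
  \<open>ln ((1 + r) / 2) \<ge> 3/2 (r - 1) - r ln r\<close> for \<open>r = q\<^sub>i / Q\<^sub>i\<close>, summed over the parties and averaged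
  over \<open>\<alpha>\<close>, gives \<open>P\<^sub>E\<^sub>q(\<tau>) \<ge> P\<^sub>U(\<tau>) - d(\<tau>)\<close>, where \<open>d(\<tau>) \<ge> 0\<close> is the contribution of \<open>\<tau>\<close> to the
  mutual information between input and transcript in nats. Summing \<open>min (P\<^sub>U, P\<^sub>E\<^sub>q)\<close> over all
  transcripts, the error of any protocol is at least \<open>1 - ln 2 \<cdot> I\<close>, so an error below \<open>0.1\<close> forces
  \<open>I \<ge> 0.9\<close> bits.\<close>

section \<open>An entropy inequality for averaged products\<close>

lemma one_minus_inverse_le_ln:
  fixes x :: real assumes "0 < x" shows "1 - 1 / x \<le> ln x"
proof -
  have "ln (1 / x) \<le> 1 / x - 1" using assms by (intro ln_le_minus_one) simp
  thus ?thesis using assms by (simp add: ln_div)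
qed

lemma mult_ln_div_ge:
  fixes k P :: real assumes "0 < k" "0 < P" shows "k - P \<le> k * ln (k / P)"
proof -
  have "k - P = k * (1 - 1 / (k / P))" using assms by (simp add: field_simps)
  also have "\<dots> \<le> k * ln (k / P)"
    using assms by (intro mult_left_mono one_minus_inverse_le_ln) auto
  finally show ?thesis .
qed

lemma abs_mult_ln_div_le:
  fixes u k P :: real
  assumes u: "0 < u" and k: "0 \<le> k" and ukP: "u * k \<le> P"
  shows "\<bar>k * ln (k / P)\<bar> \<le> \<bar>ln u\<bar> * k + P"
proof (cases "k = 0")
  case True
  thus ?thesis using ukP by simp
next
  case False
  hence kp: "0 < k" using k by simp
  hence Pp: "0 < P" using mult_pos_pos[OF u kp] ukP by linarith
  show ?thesis
  proof (cases "P \<le> k")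
    case True
    have "ln (k / P) \<le> ln (1 / u)" using u kp Pp ukP by (intro ln_mono) (auto simp: field_simps)
    also have "\<dots> \<le> \<bar>ln u\<bar>" using u by (simp add: ln_div)
    finally have "k * ln (k / P) \<le> \<bar>ln u\<bar> * k"
      using kp by (simp add: mult.commute mult_left_mono)
    moreover have "0 \<le> k * ln (k / P)" using True kp Pp by simp
    ultimately show ?thesis using Pp by linarith
  next
    case False
    have "ln (P / k) \<le> P / k - 1" using kp Pp by (intro ln_le_minus_one) simp
    hence "k * ln (P / k) \<le> P" using kp by (simp add: field_simps)
    moreover have "\<bar>k * ln (k / P)\<bar> = k * ln (P / k)"
      using False kp Pp by (simp add: ln_div abs_mult)
    moreover have "0 \<le> \<bar>ln u\<bar> * k" using kp by simp
    ultimately show ?thesis by linarith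
  qed
qed

text \<open>With \<open>r = s\<^sup>2\<close>, the tangent bounds for \<open>ln\<close> at \<open>(1 + r) / 2\<close> and at \<open>s\<close> reduce the
  claim to \<open>(s - 1)^4 \<ge> 0\<close>.\<close>
lemma ln_half_one_plus_ge:
  fixes r :: real assumes "0 \<le> r"
  shows "3/2 * (r - 1) - r * ln r \<le> ln ((1 + r) / 2)"
proof -
  define s where "s = sqrt r"
  have s0: "0 \<le> s" and rs: "r = s\<^sup>2" using assms by (auto simp: s_def)
  have "1 - 1 / ((1 + r) / 2) \<le> ln ((1 + r) / 2)"
    using assms by (intro one_minus_inverse_le_ln) simp
  hence ln_half: "(r - 1) / (r + 1) \<le> ln ((1 + r) / 2)"
    using assms by (simp add: field_simps)
  have r_ln_r: "2 * r - 2 * s \<le> r * ln r"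
  proof (cases "s = 0")
    case True
    thus ?thesis using rs by simp
  next
    case False
    hence sp: "0 < s" using s0 by simp
    have "2 * r - 2 * s = r * (2 * (1 - 1 / s))" using sp rs by (simp add: field_simps power2_eq_square)
    also have "\<dots> \<le> r * (2 * ln s)"
      using assms sp by (intro mult_left_mono one_minus_inverse_le_ln) auto
    also have "\<dots> = r * ln r" using rs sp by (simp add: ln_realpow)
    finally show ?thesis .
  qed
  have "(r - 1) - (3/2 * (r - 1) - 2 * r + 2 * s) * (r + 1) = (s - 1) ^ 4 / 2"
    unfolding rs by (simp add: field_simps power4_eq_xxxx power2_eq_square)
  moreover have "0 \<le> (s - 1) ^ 4" by simp
  ultimately have "(3/2 * (r - 1) - 2 * r + 2 * s) * (r + 1) \<le> r - 1" by linarith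
  hence "3/2 * (r - 1) - 2 * r + 2 * s \<le> (r - 1) / (r + 1)"
    using assms by (simp add: field_simps)
  thus ?thesis using ln_half r_ln_r by linarith
qed

lemma prod_half_one_plus_ge:
  fixes r :: "'a \<Rightarrow> real"
  assumes fin: "finite A" and r: "\<And>i. i \<in> A \<Longrightarrow> 0 \<le> r i"
  shows "1 + (\<Sum>i\<in>A. 3/2 * (r i - 1) - r i * ln (r i)) \<le> (\<Prod>i\<in>A. (1 + r i) / 2)"
proof -
  have pos: "0 < (1 + r i) / 2" if "i \<in> A" for i using r[OF that] by simp
  have "(\<Sum>i\<in>A. 3/2 * (r i - 1) - r i * ln (r i)) \<le> (\<Sum>i\<in>A. ln ((1 + r i) / 2))"
    using r by (intro sum_mono ln_half_one_plus_ge)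
  also have "\<dots> = ln (\<Prod>i\<in>A. (1 + r i) / 2)"
    using fin pos by (intro ln_prod[symmetric]) force+
  also have "\<dots> \<le> (\<Prod>i\<in>A. (1 + r i) / 2) - 1"
    using pos by (intro ln_le_minus_one prod_pos) auto
  finally show ?thesis by simp
qed

lemma prod_mult_ln_prod:
  fixes a :: "'a \<Rightarrow> real"
  assumes fin: "finite A"
  shows "prod a A * ln (prod a A) = (\<Sum>i\<in>A. \<Prod>j\<in>A. if j = i then a j * ln (a j) else a j)"
proof (cases "\<exists>j\<in>A. a j = 0")
  case True
  then obtain j where j: "j \<in> A" "a j = 0" by blast
  have "prod a A = 0" using fin j by (intro prod_zero) auto
  moreover have "(\<Prod>j\<in>A. if j = i then a j * ln (a j) else a j) = 0" for i
    using fin j by (intro prod_zero) (auto intro!: bexI[of _ j])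
  ultimately show ?thesis by simp
next
  case False
  have summand: "(\<Prod>j\<in>A. if j = i then a j * ln (a j) else a j) = prod a A * ln (a i)"
    if i: "i \<in> A" for i
  proof -
    have "(\<Prod>j\<in>A. if j = i then a j * ln (a j) else a j)
        = (\<Prod>j\<in>A. a j * (if j = i then ln (a i) else 1))"
      by (intro prod.cong) auto
    also have "\<dots> = prod a A * ln (a i)" using fin i by (simp add: prod.distrib)
    finally show ?thesis .
  qed
  have "ln (prod a A) = (\<Sum>i\<in>A. ln (a i))" using fin False by (intro ln_prod) auto
  thus ?thesis by (simp add: summand sum_distrib_left)
qed

definition cube_avg :: "nat \<Rightarrow> nat \<Rightarrow> ((nat \<Rightarrow> nat) \<Rightarrow> real) \<Rightarrow> real" where
  "cube_avg m t G = (\<Sum>g\<in>PiE {..<m} (\<lambda>_. {..<t}). G g) / real t ^ m"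

lemma cube_avg_prod:
  "cube_avg m t (\<lambda>g. \<Prod>i<m. h i (g i)) = (\<Prod>i<m. (\<Sum>x<t. h i x) / real t)"
proof -
  have "(\<Sum>g\<in>PiE {..<m} (\<lambda>_. {..<t}). \<Prod>i<m. h i (g i)) = (\<Prod>i<m. \<Sum>x<t. h i x)"
    by (subst prod_sum_PiE) auto
  thus ?thesis unfolding cube_avg_def by (simp add: prod_dividef)
qed

lemma cube_avg_sum: "cube_avg m t (\<lambda>g. \<Sum>i\<in>I. G i g) = (\<Sum>i\<in>I. cube_avg m t (G i))"
  unfolding cube_avg_def by (subst sum.swap) (simp add: sum_divide_distrib)

lemma cube_avg_cmult: "cube_avg m t (\<lambda>g. c * G g) = c * cube_avg m t G"
  unfolding cube_avg_def by (simp add: sum_distrib_left)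

lemma cube_avg_cong:
  "(\<And>g. g \<in> PiE {..<m} (\<lambda>_. {..<t}) \<Longrightarrow> G g = H g) \<Longrightarrow> cube_avg m t G = cube_avg m t H"
  unfolding cube_avg_def by (simp cong: sum.cong)

text \<open>Relative entropy is additive over independent coordinates.\<close>
lemma cube_avg_prod_mult_ln:
  assumes t: "0 < t" and avg: "\<And>i. i < m \<Longrightarrow> (\<Sum>x<t. r i x) = real t"
  shows "cube_avg m t (\<lambda>g. (\<Prod>i<m. r i (g i)) * ln (\<Prod>i<m. r i (g i)))
       = (\<Sum>i<m. (\<Sum>x<t. r i x * ln (r i x)) / real t)"
proof -
  have "cube_avg m t (\<lambda>g. (\<Prod>i<m. r i (g i)) * ln (\<Prod>i<m. r i (g i)))
      = (\<Sum>i<m. cube_avg m t (\<lambda>g. \<Prod>j<m. if j = i then r j (g j) * ln (r j (g j)) else r j (g j)))"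
    by (simp add: prod_mult_ln_prod cube_avg_sum)
  also have "\<dots> = (\<Sum>i<m. \<Prod>j<m. (\<Sum>x<t. if j = i then r j x * ln (r j x) else r j x) / real t)"
    by (simp only: cube_avg_prod[of m t "\<lambda>j x. if j = i then r j x * ln (r j x) else r j x" for i])
  also have "\<dots> = (\<Sum>i<m. \<Prod>j<m. if j = i then (\<Sum>x<t. r i x * ln (r i x)) / real t else 1)"
    using avg t by (intro sum.cong prod.cong) auto
  also have "\<dots> = (\<Sum>i<m. (\<Sum>x<t. r i x * ln (r i x)) / real t)" by simp
  finally show ?thesis .
qed

lemma avg_prod_half_one_plus_ge:
  fixes r :: "nat \<Rightarrow> nat \<Rightarrow> real" and m t :: nat
  assumes t: "0 < t" and r: "\<And>i x. 0 \<le> r i x"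
    and avg: "\<And>i. i < m \<Longrightarrow> (\<Sum>x<t. r i x) = real t"
  shows "1 - (\<Sum>i<m. (\<Sum>x<t. r i x * ln (r i x)) / real t)
       \<le> (\<Sum>\<alpha><t. \<Prod>i<m. (1 + r i \<alpha>) / 2) / real t"
proof -
  have "real t - (\<Sum>i<m. \<Sum>\<alpha><t. r i \<alpha> * ln (r i \<alpha>))
      = real t + (\<Sum>i<m. 3/2 * ((\<Sum>\<alpha><t. r i \<alpha>) - real t) - (\<Sum>\<alpha><t. r i \<alpha> * ln (r i \<alpha>)))"
    using avg by (simp add: sum_negf)
  also have "\<dots> = (\<Sum>\<alpha><t. 1 + (\<Sum>i<m. 3/2 * (r i \<alpha> - 1) - r i \<alpha> * ln (r i \<alpha>)))"
    by (simp add: sum.distrib sum.swap[of _ "{..<t}"] sum_subtractf sum_distrib_left right_diff_distrib)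
  also have "\<dots> \<le> (\<Sum>\<alpha><t. \<Prod>i<m. (1 + r i \<alpha>) / 2)"
    using r by (intro sum_mono prod_half_one_plus_ge) auto
  finally have "real t * (1 - (\<Sum>i<m. (\<Sum>x<t. r i x * ln (r i x)) / real t))
      \<le> (\<Sum>\<alpha><t. \<Prod>i<m. (1 + r i \<alpha>) / 2)"
    using t by (simp add: right_diff_distrib sum_divide_distrib[symmetric])
  thus ?thesis using t by (simp add: field_simps)
qed

lemma avg_prod_mixture_ge:
  fixes q :: "nat \<Rightarrow> nat \<Rightarrow> real" and m t :: nat
  assumes t: "0 < t" and q: "\<And>i x. 0 \<le> q i x"
  defines "Q \<equiv> \<lambda>i. (\<Sum>x<t. q i x) / real t"
  defines "P \<equiv> (\<Prod>i<m. Q i)"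
  shows "P - cube_avg m t (\<lambda>g. (\<Prod>i<m. q i (g i)) * ln ((\<Prod>i<m. q i (g i)) / P))
       \<le> (\<Sum>\<alpha><t. \<Prod>i<m. (q i \<alpha> + Q i) / 2) / real t"
proof (cases "P = 0")
  case True
  then obtain i where i: "i < m" "Q i = 0" unfolding P_def by auto
  hence "q i x = 0" if "x < t" for x
    using that q t unfolding Q_def by (simp add: sum_nonneg_eq_0_iff)
  hence "(\<Prod>i<m. q i (g i)) = 0" if "g \<in> PiE {..<m} (\<lambda>_. {..<t})" for g
    using that i by (intro prod_zero) (auto intro!: bexI[of _ i])
  hence "cube_avg m t (\<lambda>g. (\<Prod>i<m. q i (g i)) * ln ((\<Prod>i<m. q i (g i)) / P)) = cube_avg m t (\<lambda>g. 0)"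
    by (intro cube_avg_cong) simp
  moreover have "0 \<le> (\<Sum>\<alpha><t. \<Prod>i<m. (q i \<alpha> + Q i) / 2) / real t"
    using q unfolding Q_def by (intro divide_nonneg_nonneg sum_nonneg prod_nonneg) (auto simp: sum_nonneg)
  ultimately show ?thesis using True by (simp add: cube_avg_def)
next
  case False
  have "Q i \<noteq> 0" if "i < m" for i
    using False that unfolding P_def by auto
  moreover have "0 \<le> Q i" for i unfolding Q_def using q by (simp add: sum_nonneg)
  ultimately have Qpos: "0 < Q i" if "i < m" for i using that by (simp add: order_less_le)
  have Ppos: "0 < P" unfolding P_def using Qpos by (intro prod_pos) auto
  define r where "r i x = q i x / Q i" for i x
  have q_eq: "q i x = Q i * r i x" if "i < m" for i x
    using Qpos[OF that] unfolding r_def by simp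
  have r: "0 \<le> r i x" for i x unfolding r_def using q \<open>\<And>i. 0 \<le> Q i\<close> by simp
  have avg: "(\<Sum>x<t. r i x) = real t" if "i < m" for i
  proof -
    have "(\<Sum>x<t. r i x) = (\<Sum>x<t. q i x) / Q i" unfolding r_def by (simp add: sum_divide_distrib)
    also have "\<dots> = real t" using Qpos[OF that] t unfolding Q_def by (simp add: field_simps)
    finally show ?thesis .
  qed
  have prod_q: "(\<Prod>i<m. q i (g i)) = P * (\<Prod>i<m. r i (g i))" for g
    unfolding P_def by (simp add: q_eq prod.distrib)
  have mixture: "(\<Prod>i<m. (q i \<alpha> + Q i) / 2) = P * (\<Prod>i<m. (1 + r i \<alpha>) / 2)" for \<alpha>
  proof -
    have "(\<Prod>i<m. (q i \<alpha> + Q i) / 2) = (\<Prod>i<m. Q i * ((1 + r i \<alpha>) / 2))"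
      using q_eq by (intro prod.cong) (auto simp: field_simps)
    also have "\<dots> = P * (\<Prod>i<m. (1 + r i \<alpha>) / 2)" unfolding P_def by (rule prod.distrib)
    finally show ?thesis .
  qed
  have "P - cube_avg m t (\<lambda>g. (\<Prod>i<m. q i (g i)) * ln ((\<Prod>i<m. q i (g i)) / P))
      = P * (1 - (\<Sum>i<m. (\<Sum>x<t. r i x * ln (r i x)) / real t))"
    using Ppos by (simp add: prod_q mult.assoc cube_avg_cmult cube_avg_prod_mult_ln[OF t avg]
        right_diff_distrib)
  also have "\<dots> \<le> P * ((\<Sum>\<alpha><t. \<Prod>i<m. (1 + r i \<alpha>) / 2) / real t)"
    using Ppos by (intro mult_left_mono avg_prod_half_one_plus_ge[OF t r avg]) auto
  also have "\<dots> = (\<Sum>\<alpha><t. \<Prod>i<m. (q i \<alpha> + Q i) / 2) / real t"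
    by (simp add: mixture sum_distrib_left)
  finally show ?thesis .
qed

section \<open>Mutual information as a sum over outcomes\<close>

lemma pmf_bind_map_Pair:
  "pmf (p \<bind> (\<lambda>x. map_pmf (Pair x) (K x))) (a, b) = pmf p a * pmf (K a) b"
proof -
  have "pmf (map_pmf (Pair x) (K x)) (a, b) = indicator {a} x * pmf (K a) b" for x
  proof (cases "x = a")
    case True
    have "pmf (map_pmf (Pair a) (K a)) (Pair a b) = pmf (K a) b"
      by (rule pmf_map_inj') (auto simp: inj_def)
    thus ?thesis using True by simp
  next
    case False
    thus ?thesis by (subst pmf_map_outside) auto
  qed
  hence "pmf (p \<bind> (\<lambda>x. map_pmf (Pair x) (K x))) (a, b) = measure p {a} * pmf (K a) b"
    by (simp add: pmf_bind)
  thus ?thesis by (simp add: measure_pmf_single)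
qed

lemma pmf_swap_bind_map_Pair:
  "pmf (map_pmf prod.swap (p \<bind> (\<lambda>x. map_pmf (Pair x) (K x)))) (b, a) = pmf p a * pmf (K a) b"
proof -
  have "pmf (map_pmf prod.swap (p \<bind> (\<lambda>x. map_pmf (Pair x) (K x)))) (prod.swap (a, b))
      = pmf (p \<bind> (\<lambda>x. map_pmf (Pair x) (K x))) (a, b)"
    by (rule pmf_map_inj') simp
  thus ?thesis by (simp add: pmf_bind_map_Pair)
qed

lemma distributed_map_pmf:
  fixes X :: "'a \<Rightarrow> 'c::countable"
  shows "distributed (measure_pmf J) (count_space UNIV) X (\<lambda>x. ennreal (pmf (map_pmf X J) x))"
  unfolding distributed_def
proof (intro conjI)
  show "distr (measure_pmf J) (count_space UNIV) X
      = density (count_space UNIV) (\<lambda>x. ennreal (pmf (map_pmf X J) x))"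
    unfolding map_pmf_rep_eq[symmetric] by (rule measure_pmf_eq_density)
qed auto

lemma mutual_information_bind_map_Pair:
  fixes U :: "'a::countable pmf" and K :: "'a \<Rightarrow> 'b::countable pmf"
  shows "prob_space.mutual_information (measure_pmf (U \<bind> (\<lambda>z. map_pmf (Pair z) (K z)))) 2
           (count_space UNIV) (count_space UNIV) snd fst
       = infsetsum (\<lambda>(\<tau>, z). pmf U z * pmf (K z) \<tau> * log 2 (pmf (K z) \<tau> / pmf (U \<bind> K) \<tau>)) UNIV"
proof -
  define J where "J = U \<bind> (\<lambda>z. map_pmf (Pair z) (K z))"
  have marg_fst: "map_pmf fst J = U"
    by (simp add: J_def map_bind_pmf pmf.map_comp o_def bind_pmf_const bind_return_pmf')
  have marg_snd: "map_pmf snd J = U \<bind> K"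
    by (simp add: J_def map_bind_pmf pmf.map_comp o_def)
  have info: "information_space (measure_pmf J) 2" by unfold_locales simp
  have count: "count_space (UNIV :: 'b set) \<Otimes>\<^sub>M count_space (UNIV :: 'a set) = count_space UNIV"
    by (subst pair_measure_countable) auto
  have swap: "(\<lambda>x. (snd x, fst x)) = prod.swap" by auto
  have joint: "distributed (measure_pmf J) (count_space UNIV \<Otimes>\<^sub>M count_space UNIV)
      (\<lambda>x. (snd x, fst x)) (\<lambda>x. ennreal (pmf (map_pmf prod.swap J) x))"
    unfolding count swap by (rule distributed_map_pmf)
  have "prob_space.mutual_information (measure_pmf J) 2 (count_space UNIV) (count_space UNIV) snd fst
      = infsetsum (\<lambda>x. pmf (map_pmf prod.swap J) x *
          log 2 (pmf (map_pmf prod.swap J) x / (pmf (map_pmf snd J) (fst x) * pmf (map_pmf fst J) (snd x)))) UNIV"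
    unfolding infsetsum_def count[symmetric]
    by (intro information_space.mutual_information_distr[OF info sigma_finite_measure_count_space
          sigma_finite_measure_count_space distributed_map_pmf _ distributed_map_pmf _ joint])
      auto
  also have "\<dots> = infsetsum (\<lambda>(\<tau>, z). pmf U z * pmf (K z) \<tau> * log 2 (pmf (K z) \<tau> / pmf (U \<bind> K) \<tau>)) UNIV"
    by (intro infsetsum_cong) (auto simp: J_def pmf_swap_bind_map_Pair marg_fst[unfolded J_def]
        marg_snd[unfolded J_def])
  finally show ?thesis unfolding J_def .
qed

lemma measure_pmf_add_compl_ge:
  fixes p q :: "'a pmf" and d :: "'a \<Rightarrow> real"
  assumes d_summable: "Infinite_Set_Sum.abs_summable_on d UNIV" and d_nonneg: "\<And>x. 0 \<le> d x"
    and close: "\<And>x. pmf p x - d x \<le> pmf q x"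
  shows "1 - infsetsum d UNIV \<le> measure_pmf.prob p A + measure_pmf.prob q (- A)"
proof -
  define h where "h x = pmf p x - d x" for x
  have h_summable: "Infinite_Set_Sum.abs_summable_on h B" for B
    unfolding h_def
    by (rule abs_summable_on_subset[OF abs_summable_on_diff[OF pmf_abs_summable d_summable] subset_UNIV])
  have "1 - infsetsum d UNIV = infsetsum h UNIV"
    unfolding h_def using d_summable by (simp add: infsetsum_diff pmf_abs_summable infsetsum_pmf_eq_1)
  also have "\<dots> = infsetsum h A + infsetsum h (- A)"
    using h_summable by (subst infsetsum_Un_disjoint[symmetric]) auto
  also have "\<dots> \<le> infsetsum (pmf p) A + infsetsum (pmf q) (- A)"
    using d_nonneg close
    by (intro add_mono infsetsum_mono h_summable pmf_abs_summable) (auto simp: h_def)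
  finally show ?thesis by (simp add: measure_pmf_conv_infsetsum)
qed

definition info_contribution :: "'a pmf \<Rightarrow> ('a \<Rightarrow> 'b pmf) \<Rightarrow> 'b \<Rightarrow> real" where
  "info_contribution U K \<tau> =
     measure_pmf.expectation U (\<lambda>z. pmf (K z) \<tau> * ln (pmf (K z) \<tau> / pmf (U \<bind> K) \<tau>))"

context
  fixes U :: "'a::countable pmf" and K :: "'a \<Rightarrow> 'b::countable pmf"
  assumes fin: "finite (set_pmf U)"
begin

lemma pmf_bind_eq_sum: "pmf (U \<bind> K) \<tau> = (\<Sum>z\<in>set_pmf U. pmf U z * pmf (K z) \<tau>)"
  unfolding pmf_bind using fin by (subst integral_measure_pmf[of "set_pmf U"]) auto

lemma info_contribution_eq_sum:
  "info_contribution U K \<tau>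
     = (\<Sum>z\<in>set_pmf U. pmf U z * pmf (K z) \<tau> * ln (pmf (K z) \<tau> / pmf (U \<bind> K) \<tau>))"
  unfolding info_contribution_def using fin
  by (subst integral_measure_pmf[of "set_pmf U"]) (auto simp: mult.assoc)

lemma info_contribution_nonneg: "0 \<le> info_contribution U K \<tau>"
proof -
  define P where "P = pmf (U \<bind> K) \<tau>"
  have "(\<Sum>z\<in>set_pmf U. pmf U z * pmf (K z) \<tau> - pmf U z * P)
      \<le> (\<Sum>z\<in>set_pmf U. pmf U z * pmf (K z) \<tau> * ln (pmf (K z) \<tau> / P))"
  proof (intro sum_mono)
    fix z assume z: "z \<in> set_pmf U"
    show "pmf U z * pmf (K z) \<tau> - pmf U z * P \<le> pmf U z * pmf (K z) \<tau> * ln (pmf (K z) \<tau> / P)"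
    proof (cases "pmf (K z) \<tau> = 0")
      case True
      thus ?thesis by (simp add: P_def)
    next
      case False
      have "pmf U z * pmf (K z) \<tau> \<le> P"
        unfolding P_def pmf_bind_eq_sum using fin z by (intro member_le_sum) auto
      moreover have "0 < pmf U z * pmf (K z) \<tau>"
        using False pmf_positive[OF z] by (simp add: order_less_le)
      ultimately have "0 < P" by linarith
      hence "pmf U z * (pmf (K z) \<tau> - P) \<le> pmf U z * (pmf (K z) \<tau> * ln (pmf (K z) \<tau> / P))"
        using False by (intro mult_left_mono mult_ln_div_ge) (auto simp: order_less_le)
      thus ?thesis by (simp add: algebra_simps)
    qed
  qed
  moreover have "(\<Sum>z\<in>set_pmf U. pmf U z * pmf (K z) \<tau> - pmf U z * P) = 0"
    using fin by (simp add: sum_subtractf P_def pmf_bind_eq_sum[symmetric] sum_distrib_right[symmetric]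
        sum_pmf_eq_1)
  ultimately show ?thesis by (simp add: info_contribution_eq_sum P_def)
qed

lemma abs_summable_info_integrand:
  "Infinite_Set_Sum.abs_summable_on
     (\<lambda>(\<tau>, z). pmf U z * pmf (K z) \<tau> * ln (pmf (K z) \<tau> / pmf (U \<bind> K) \<tau>)) UNIV"
proof (rule abs_summable_on_comparison_test')
  define C where "C = (\<Sum>z\<in>set_pmf U. \<bar>ln (pmf U z)\<bar>)"
  define J where "J = map_pmf prod.swap (U \<bind> (\<lambda>z. map_pmf (Pair z) (K z)))"
  show "Infinite_Set_Sum.abs_summable_on (\<lambda>x. C * pmf J x + pmf (pair_pmf (U \<bind> K) U) x) UNIV"
    by (intro abs_summable_on_add abs_summable_on_cmult_right pmf_abs_summable)
  fix x :: "'b \<times> 'a"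
  obtain \<tau> z where x: "x = (\<tau>, z)" by fastforce
  define u k P where "u = pmf U z" and "k = pmf (K z) \<tau>" and "P = pmf (U \<bind> K) \<tau>"
  have "\<bar>u * k * ln (k / P)\<bar> \<le> C * (u * k) + u * P"
  proof (cases "z \<in> set_pmf U")
    case True
    hence u: "0 < u" by (simp add: u_def pmf_positive)
    have "u * k \<le> P"
      unfolding u_def k_def P_def pmf_bind_eq_sum using fin True by (intro member_le_sum) auto
    hence "u * \<bar>k * ln (k / P)\<bar> \<le> u * (\<bar>ln u\<bar> * k + P)"
      using u by (intro mult_left_mono abs_mult_ln_div_le) (auto simp: k_def)
    moreover have "\<bar>ln u\<bar> \<le> C" unfolding C_def u_def using fin True by (intro member_le_sum) auto
    moreover have "0 \<le> u * k" using u by (simp add: k_def)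
    ultimately have "u * \<bar>k * ln (k / P)\<bar> \<le> C * (u * k) + u * P"
      by (smt (verit) mult_right_mono distrib_left mult.assoc mult.commute)
    thus ?thesis using u by (simp add: abs_mult mult.assoc)
  next
    case False
    hence "u = 0" by (simp add: u_def set_pmf_eq)
    thus ?thesis by (simp add: C_def P_def)
  qed
  thus "norm ((\<lambda>(\<tau>, z). pmf U z * pmf (K z) \<tau> * ln (pmf (K z) \<tau> / pmf (U \<bind> K) \<tau>)) x)
      \<le> C * pmf J x + pmf (pair_pmf (U \<bind> K) U) x"
    by (simp add: x J_def pmf_swap_bind_map_Pair pmf_pair u_def k_def P_def mult.commute)
qed

lemma infsetsum_info_integrand_eq_info_contribution:
  "infsetsum (\<lambda>z. pmf U z * pmf (K z) \<tau> * ln (pmf (K z) \<tau> / pmf (U \<bind> K) \<tau>)) UNIV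
     = info_contribution U K \<tau>"
proof -
  have "infsetsum (\<lambda>z. pmf U z * pmf (K z) \<tau> * ln (pmf (K z) \<tau> / pmf (U \<bind> K) \<tau>)) UNIV
      = infsetsum (\<lambda>z. pmf U z * pmf (K z) \<tau> * ln (pmf (K z) \<tau> / pmf (U \<bind> K) \<tau>)) (set_pmf U)"
    by (rule infsetsum_cong_neutral) (auto simp: set_pmf_eq)
  thus ?thesis using fin by (simp add: info_contribution_eq_sum)
qed

lemma abs_summable_info_contribution:
  "Infinite_Set_Sum.abs_summable_on (info_contribution U K) UNIV"
  using abs_summable_on_Sigma_project1'[OF abs_summable_info_integrand[unfolded UNIV_Times_UNIV[symmetric]]]
  by (simp add: infsetsum_info_integrand_eq_info_contribution)

lemma infsetsum_info_contribution:
  "infsetsum (info_contribution U K) UNIV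
     = ln 2 * prob_space.mutual_information (measure_pmf (U \<bind> (\<lambda>z. map_pmf (Pair z) (K z)))) 2
         (count_space UNIV) (count_space UNIV) snd fst"
proof -
  let ?g = "\<lambda>(\<tau>, z). pmf U z * pmf (K z) \<tau> * ln (pmf (K z) \<tau> / pmf (U \<bind> K) \<tau>)"
  have "infsetsum (info_contribution U K) UNIV = infsetsum ?g (UNIV \<times> UNIV)"
    using abs_summable_info_integrand
    by (subst infsetsum_Times) (auto simp: infsetsum_info_integrand_eq_info_contribution)
  also have "\<dots> = ln 2 * (infsetsum ?g UNIV / ln 2)" by simp
  also have "infsetsum ?g UNIV / ln 2
      = infsetsum (\<lambda>(\<tau>, z). pmf U z * pmf (K z) \<tau> * log 2 (pmf (K z) \<tau> / pmf (U \<bind> K) \<tau>)) UNIV"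
    using abs_summable_info_integrand
    by (subst infsetsum_cdiv[symmetric]) (auto intro!: infsetsum_cong simp: log_def)
  finally show ?thesis by (simp add: mutual_information_bind_map_Pair)
qed

lemma bind_error_ge_one_minus_mutual_information:
  assumes close: "\<And>\<tau>. pmf (U \<bind> K) \<tau> - info_contribution U K \<tau> \<le> pmf (V \<bind> K) \<tau>"
  shows "1 - ln 2 * prob_space.mutual_information (measure_pmf (U \<bind> (\<lambda>z. map_pmf (Pair z) (K z)))) 2
             (count_space UNIV) (count_space UNIV) snd fst
       \<le> measure_pmf.prob (U \<bind> K) A + (1 - measure_pmf.prob (V \<bind> K) A)"
  using measure_pmf_add_compl_ge[OF abs_summable_info_contribution info_contribution_nonneg close, of A]
    measure_pmf.prob_compl[of A "V \<bind> K"]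
  by (simp add: infsetsum_info_contribution Compl_eq_Diff_UNIV)

end

section \<open>Protocols under the two input distributions\<close>

lemma transcript_Suc_eq_map_pmf:
  "transcript spk msg z (Suc n) =
     map_pmf (\<lambda>(\<sigma>, a). \<sigma> @ [a]) (transcript spk msg z n \<bind> (\<lambda>\<sigma>. map_pmf (Pair \<sigma>) (msg \<sigma> (z ! spk \<sigma>))))"
  by (simp add: map_pmf_def bind_assoc_pmf bind_return_pmf)

lemma pmf_transcript:
  "pmf (transcript spk msg z n) \<tau> =
     (if length \<tau> = n then \<Prod>k<n. pmf (msg (take k \<tau>) (z ! spk (take k \<tau>))) (\<tau> ! k) else 0)"
proof (induction n arbitrary: \<tau>)
  case 0
  thus ?case by (cases \<tau>) auto
next
  case (Suc n)
  show ?case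
  proof (cases \<tau> rule: rev_exhaust)
    case Nil
    have "pmf (transcript spk msg z (Suc n)) [] = 0"
      unfolding transcript_Suc_eq_map_pmf by (rule pmf_map_outside) auto
    thus ?thesis using Nil by simp
  next
    case (snoc \<sigma> a)
    have inj: "inj (\<lambda>(\<sigma>::nat list, a::nat). \<sigma> @ [a])" by (auto simp: inj_def)
    have "pmf (transcript spk msg z (Suc n)) \<tau> =
        pmf (transcript spk msg z n) \<sigma> * pmf (msg \<sigma> (z ! spk \<sigma>)) a"
      unfolding transcript_Suc_eq_map_pmf snoc
      using pmf_map_inj'[OF inj, of _ "(\<sigma>, a)"] by (simp add: pmf_bind_map_Pair)
    moreover have "(\<Prod>k<Suc n. pmf (msg (take k \<tau>) (z ! spk (take k \<tau>))) (\<tau> ! k))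
        = (\<Prod>k<n. pmf (msg (take k \<sigma>) (z ! spk (take k \<sigma>))) (\<sigma> ! k)) * pmf (msg \<sigma> (z ! spk \<sigma>)) a"
      if "length \<sigma> = n"
      unfolding prod.lessThan_Suc snoc using that
      by (intro arg_cong2[where f = "(*)"] prod.cong) (auto simp: nth_append)
    ultimately show ?thesis using Suc.IH[of \<sigma>] snoc by auto
  qed
qed

definition speaker_weight ::
    "(nat list \<Rightarrow> nat) \<Rightarrow> (nat list \<Rightarrow> nat \<Rightarrow> nat pmf) \<Rightarrow> nat \<Rightarrow> nat list \<Rightarrow> nat \<Rightarrow> nat \<Rightarrow> real" where
  "speaker_weight spk msg R \<tau> i x = (\<Prod>k\<in>{k\<in>{..<R}. spk (take k \<tau>) = i}. pmf (msg (take k \<tau>) x) (\<tau> ! k))"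

lemma speaker_weight_nonneg: "0 \<le> speaker_weight spk msg R \<tau> i x"
  unfolding speaker_weight_def by (simp add: prod_nonneg)

lemma pmf_transcript_eq_prod_speaker_weight:
  assumes "\<And>\<sigma>. spk \<sigma> < m" "length \<tau> = R"
  shows "pmf (transcript spk msg z R) \<tau> = (\<Prod>i<m. speaker_weight spk msg R \<tau> i (z ! i))"
proof -
  have "(\<Prod>i<m. speaker_weight spk msg R \<tau> i (z ! i)) =
        (\<Prod>i<m. \<Prod>k\<in>{k\<in>{..<R}. spk (take k \<tau>) = i}. pmf (msg (take k \<tau>) (z ! spk (take k \<tau>))) (\<tau> ! k))"
    unfolding speaker_weight_def by (intro prod.cong refl) auto
  also have "\<dots> = (\<Prod>k<R. pmf (msg (take k \<tau>) (z ! spk (take k \<tau>))) (\<tau> ! k))"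
    by (rule prod.group) (use assms in auto)
  finally show ?thesis using assms by (simp add: pmf_transcript)
qed

lemma unif_inputs_eq_map_pmf_of_set:
  assumes "0 < t"
  shows "unif_inputs m t = map_pmf (\<lambda>f. map f [0..<m]) (pmf_of_set (PiE_dflt {..<m} 0 (\<lambda>_. {..<t})))"
  unfolding unif_inputs_def using assms by (subst Pi_pmf_of_set) auto

lemma expectation_unif_inputs:
  assumes t: "0 < t"
  shows "measure_pmf.expectation (unif_inputs m t) G = cube_avg m t (\<lambda>g. G (map g [0..<m]))"
proof -
  define S where "S = PiE_dflt {..<m} (0::nat) (\<lambda>_. {..<t})"
  have fin: "finite S" unfolding S_def by (intro finite_PiE_dflt) auto
  have ne: "S \<noteq> {}" using t unfolding S_def by auto
  have card: "card S = t ^ m" unfolding S_def by (subst card_PiE_dflt) auto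
  have "inj_on (\<lambda>f. restrict f {..<m}) S"
  proof (rule inj_onI, rule ext)
    fix f g x assume "f \<in> S" "g \<in> S" "restrict f {..<m} = restrict g {..<m}"
    thus "f x = g x" unfolding S_def PiE_dflt_def by (cases "x < m") (auto dest: fun_cong[of _ _ x])
  qed
  hence bij: "bij_betw (\<lambda>f. restrict f {..<m}) S (PiE {..<m} (\<lambda>_. {..<t}))"
    unfolding bij_betw_def S_def by (simp add: restrict_PiE_dflt)
  have "(\<Sum>f\<in>S. G (map f [0..<m])) = (\<Sum>f\<in>S. G (map (restrict f {..<m}) [0..<m]))"
    by (intro sum.cong refl arg_cong[where f = G] map_cong) auto
  also have "\<dots> = (\<Sum>g\<in>PiE {..<m} (\<lambda>_. {..<t}). G (map g [0..<m]))"
    by (rule sum.reindex_bij_betw[OF bij])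
  finally show ?thesis
    unfolding unif_inputs_eq_map_pmf_of_set[OF t] S_def[symmetric] cube_avg_def
    by (simp add: integral_pmf_of_set[OF ne fin] card)
qed

lemma finite_set_pmf_unif_inputs:
  assumes t: "0 < t" shows "finite (set_pmf (unif_inputs m t))"
proof -
  have "finite (PiE_dflt {..<m} (0::nat) (\<lambda>_. {..<t}))" "PiE_dflt {..<m} (0::nat) (\<lambda>_. {..<t}) \<noteq> {}"
    using t by (auto intro!: finite_PiE_dflt)
  thus ?thesis by (simp add: unif_inputs_eq_map_pmf_of_set[OF t])
qed

definition eq_coord_pmf :: "nat \<Rightarrow> nat \<Rightarrow> nat pmf" where
  "eq_coord_pmf t \<alpha> = bernoulli_pmf (1/2) \<bind> (\<lambda>b. if b then return_pmf \<alpha> else pmf_of_set {..<t})"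

lemma eq_inputs_eq_bind:
  "eq_inputs m t = pmf_of_set {..<t} \<bind>
     (\<lambda>\<alpha>. map_pmf (\<lambda>f. map f [0..<m]) (Pi_pmf {..<m} 0 (\<lambda>_. eq_coord_pmf t \<alpha>)))"
  unfolding eq_inputs_def eq_coord_pmf_def by simp

lemma finite_set_pmf_eq_coord_pmf: "0 < t \<Longrightarrow> finite (set_pmf (eq_coord_pmf t \<alpha>))"
  unfolding eq_coord_pmf_def by (auto simp: lessThan_empty_iff)

lemma expectation_eq_coord_pmf:
  fixes f :: "nat \<Rightarrow> real"
  assumes t: "0 < t"
  shows "measure_pmf.expectation (eq_coord_pmf t \<alpha>) f = (f \<alpha> + (\<Sum>x<t. f x) / real t) / 2"
proof -
  have ne: "{..<t} \<noteq> {}" using t by auto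
  have "measure_pmf.expectation (eq_coord_pmf t \<alpha>) f =
     (\<Sum>b\<in>UNIV. pmf (bernoulli_pmf (1/2)) b *\<^sub>R
        measure_pmf.expectation (if b then return_pmf \<alpha> else pmf_of_set {..<t}) f)"
    unfolding eq_coord_pmf_def by (rule pmf_expectation_bind) (use ne in auto)
  thus ?thesis using ne by (simp add: UNIV_bool integral_pmf_of_set field_simps)
qed

lemma expectation_eq_inputs_prod:
  fixes q :: "nat \<Rightarrow> nat \<Rightarrow> real"
  assumes t: "0 < t" and q: "\<And>i x. 0 \<le> q i x"
  shows "measure_pmf.expectation (eq_inputs m t) (\<lambda>z. \<Prod>i<m. q i (z ! i))
       = (\<Sum>\<alpha><t. \<Prod>i<m. (q i \<alpha> + (\<Sum>x<t. q i x) / real t) / 2) / real t"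
proof -
  let ?lst = "\<lambda>f. map f [0..<m]"
  have fin: "finite (set_pmf (map_pmf ?lst (Pi_pmf {..<m} 0 (\<lambda>_. eq_coord_pmf t \<alpha>))))" for \<alpha>
    using finite_set_pmf_eq_coord_pmf[OF t] by (auto simp: set_Pi_pmf)
  have "(\<Prod>i<m. q i (map f [0..<m] ! i)) = (\<Prod>i<m. q i (f i))" for f
    by (intro prod.cong) auto
  hence "measure_pmf.expectation (map_pmf ?lst (Pi_pmf {..<m} 0 (\<lambda>_. eq_coord_pmf t \<alpha>)))
      (\<lambda>z. \<Prod>i<m. q i (z ! i)) = (\<Prod>i<m. (q i \<alpha> + (\<Sum>x<t. q i x) / real t) / 2)" for \<alpha>
    using finite_set_pmf_eq_coord_pmf[OF t] q
    by (simp, subst expectation_prod_Pi_pmf)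
      (auto intro: integrable_measure_pmf_finite simp: expectation_eq_coord_pmf[OF t])
  moreover have "measure_pmf.expectation (eq_inputs m t) (\<lambda>z. \<Prod>i<m. q i (z ! i))
      = (\<Sum>\<alpha><t. measure_pmf.expectation (map_pmf ?lst (Pi_pmf {..<m} 0 (\<lambda>_. eq_coord_pmf t \<alpha>)))
          (\<lambda>z. \<Prod>i<m. q i (z ! i)) /\<^sub>R real t)"
    unfolding eq_inputs_eq_bind using t fin by (subst pmf_expectation_bind_pmf_of_set) auto
  ultimately show ?thesis by (simp add: sum_divide_distrib field_simps)
qed

lemma pmf_eq_inputs_transcript_ge:
  fixes spk :: "nat list \<Rightarrow> nat" and msg :: "nat list \<Rightarrow> nat \<Rightarrow> nat pmf" and R m t :: nat
  assumes t: "0 < t" and spk: "\<And>\<sigma>. spk \<sigma> < m"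
  defines "K \<equiv> \<lambda>z. transcript spk msg z R"
  shows "pmf (unif_inputs m t \<bind> K) \<tau> - info_contribution (unif_inputs m t) K \<tau> \<le> pmf (eq_inputs m t \<bind> K) \<tau>"
proof (cases "length \<tau> = R")
  case False
  hence "pmf (K z) \<tau> = 0" for z unfolding K_def by (simp add: pmf_transcript)
  thus ?thesis by (simp add: pmf_bind info_contribution_def)
next
  case True
  define q where "q = speaker_weight spk msg R \<tau>"
  define P where "P = (\<Prod>i<m. (\<Sum>x<t. q i x) / real t)"
  have q: "0 \<le> q i x" for i x unfolding q_def by (rule speaker_weight_nonneg)
  have K: "pmf (K (map g [0..<m])) \<tau> = (\<Prod>i<m. q i (g i))" for g
    unfolding K_def q_def pmf_transcript_eq_prod_speaker_weight[OF spk True] by (intro prod.cong) auto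
  have "pmf (unif_inputs m t \<bind> K) \<tau> = cube_avg m t (\<lambda>g. \<Prod>i<m. q i (g i))"
    by (simp add: pmf_bind expectation_unif_inputs[OF t] K)
  hence P: "pmf (unif_inputs m t \<bind> K) \<tau> = P"
    by (simp add: cube_avg_prod P_def)
  have "info_contribution (unif_inputs m t) K \<tau>
      = cube_avg m t (\<lambda>g. (\<Prod>i<m. q i (g i)) * ln ((\<Prod>i<m. q i (g i)) / P))"
    by (simp add: info_contribution_def expectation_unif_inputs[OF t] K P)
  moreover have "pmf (eq_inputs m t \<bind> K) \<tau> = (\<Sum>\<alpha><t. \<Prod>i<m. (q i \<alpha> + (\<Sum>x<t. q i x) / real t) / 2) / real t"
    unfolding pmf_bind K_def q_def pmf_transcript_eq_prod_speaker_weight[OF spk True]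
    by (rule expectation_eq_inputs_prod[OF t speaker_weight_nonneg])
  ultimately show ?thesis
    unfolding P P_def using avg_prod_mixture_ge[OF t q, where m = m] by simp
qed

lemma input_transcript_eq_bind:
  "input_transcript D spk msg R = D \<bind> (\<lambda>z. map_pmf (Pair z) (transcript spk msg z R))"
  by (simp add: input_transcript_def map_pmf_def)

lemma prob_out1_eq_prob_bind:
  "prob_out1 D spk msg R out = measure_pmf.prob (D \<bind> (\<lambda>z. transcript spk msg z R)) {\<tau>. out \<tau>}"
proof -
  have "map_pmf snd (input_transcript D spk msg R) = D \<bind> (\<lambda>z. transcript spk msg z R)"
    by (simp add: input_transcript_eq_bind map_bind_pmf pmf.map_comp o_def)
  thus ?thesis unfolding prob_out1_def by (metis measure_map_pmf vimage_Collect_eq)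
qed

theorem lemma5p2:
  shows "\<exists>c>0. \<forall>(m::nat) (t::nat) (R::nat) (spk::nat list \<Rightarrow> nat)
                (msg::nat list \<Rightarrow> nat \<Rightarrow> nat pmf) (out::nat list \<Rightarrow> bool).
     0 < t \<longrightarrow> real m \<le> real t / 100 \<longrightarrow>
     (\<forall>\<tau>. spk \<tau> < m) \<longrightarrow>
     prob_out1 (unif_inputs m t) spk msg R out
       + (1 - prob_out1 (eq_inputs m t) spk msg R out) < 0.1 \<longrightarrow>
     info_cost (unif_inputs m t) spk msg R \<ge> c"
proof (intro exI[of _ "9/10"] conjI allI impI)
  fix m t R :: nat and spk :: "nat list \<Rightarrow> nat" and msg :: "nat list \<Rightarrow> nat \<Rightarrow> nat pmf"
    and out :: "nat list \<Rightarrow> bool"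
  assume t: "0 < t" and "real m \<le> real t / 100" and spk: "\<forall>\<tau>. spk \<tau> < m"
    and err: "prob_out1 (unif_inputs m t) spk msg R out + (1 - prob_out1 (eq_inputs m t) spk msg R out) < 0.1"
  define K where "K = (\<lambda>z. transcript spk msg z R)"
  have close: "pmf (unif_inputs m t \<bind> K) \<tau> - info_contribution (unif_inputs m t) K \<tau>
      \<le> pmf (eq_inputs m t \<bind> K) \<tau>" for \<tau>
    unfolding K_def using spk by (intro pmf_eq_inputs_transcript_ge[OF t]) auto
  have "1 - ln 2 * info_cost (unif_inputs m t) spk msg R < 0.1"
    using bind_error_ge_one_minus_mutual_information[OF finite_set_pmf_unif_inputs[OF t] close,
        where A = "{\<tau>. out \<tau>}"] err
    by (simp add: info_cost_def input_transcript_eq_bind prob_out1_eq_prob_bind K_def)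
  moreover have "ln (2::real) \<le> 1" using ln_le_minus_one[of 2] by simp
  moreover have "ln 2 * info_cost (unif_inputs m t) spk msg R < ln 2 * (9/10)"
    if "info_cost (unif_inputs m t) spk msg R < 9/10"
    using that by (intro mult_strict_left_mono) auto
  ultimately show "9/10 \<le> info_cost (unif_inputs m t) spk msg R" by linarith
qed simp

end
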